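(* Let $F$ be a field of characteristic not $2$, $D$ a division quaternion algebra over $F$, and let $G=D^\times\times D^\times\times\mathrm{GL}_2$ act on $V=D\oplus D$ by $(x,y)\cdot\rho(g_1,g_2,g_3)=(g_1^{-1}xg_2,\,g_1^{-1}yg_2)g_3$. Then there are exactly two singular $G(F)$-orbits in $V(F)$ (orbits of elements $x$ with $P(x)=0$): the orbit of $(0,0)$ and the orbit of $(0,1)$.
   Context: Here $(x,y)g_3$ for $g_3=\left(\begin{smallmatrix}a&b\\c&d\end{smallmatrix}\right)$ means $(ax+cy,\,bx+dy)$. $x\mapsto x^\iota$ is the standard involution of $D$, and $P(x,y)=-\mathrm{Nrd}(xy^\iota-yx^\iota)$, where $\mathrm{Nrd}(z)=zz^\iota$ is the reduced norm. *)

theory Defs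
  imports Main
begin

text \<open>Quaternion algebra (a,b)_F over a field F (char not 2), with basis 1,i,j,k,
  i^2 = a, j^2 = b, k = ij = -ji. Elements are coordinate 4-tuples.\<close>

datatype 'f quat = Quat 'f 'f 'f 'f

fun qmul :: "'f::field \<Rightarrow> 'f \<Rightarrow> 'f quat \<Rightarrow> 'f quat \<Rightarrow> 'f quat" where
  "qmul a b (Quat x0 x1 x2 x3) (Quat y0 y1 y2 y3) =
     Quat (x0*y0 + a*x1*y1 + b*x2*y2 - a*b*x3*y3)
          (x0*y1 + x1*y0 - b*x2*y3 + b*x3*y2)
          (x0*y2 + x2*y0 + a*x1*y3 - a*x3*y1)
          (x0*y3 + x3*y0 + x1*y2 - x2*y1)"

fun qadd :: "'f::field quat \<Rightarrow> 'f quat \<Rightarrow> 'f quat" where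
  "qadd (Quat x0 x1 x2 x3) (Quat y0 y1 y2 y3) = Quat (x0+y0) (x1+y1) (x2+y2) (x3+y3)"

fun qsub :: "'f::field quat \<Rightarrow> 'f quat \<Rightarrow> 'f quat" where
  "qsub (Quat x0 x1 x2 x3) (Quat y0 y1 y2 y3) = Quat (x0-y0) (x1-y1) (x2-y2) (x3-y3)"

fun qscale :: "'f::field \<Rightarrow> 'f quat \<Rightarrow> 'f quat" where
  "qscale c (Quat x0 x1 x2 x3) = Quat (c*x0) (c*x1) (c*x2) (c*x3)"

definition qzero :: "'f::field quat" where "qzero = Quat 0 0 0 0"
definition qone :: "'f::field quat" where "qone = Quat 1 0 0 0"

fun qconj :: "'f::field quat \<Rightarrow> 'f quat" where
  "qconj (Quat x0 x1 x2 x3) = Quat x0 (-x1) (-x2) (-x3)"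

text \<open>Reduced norm Nrd(z) = z z^\<iota> (a scalar; we take its 1-coordinate).\<close>
fun scalar_part :: "'f quat \<Rightarrow> 'f" where
  "scalar_part (Quat x0 _ _ _) = x0"

definition nrd :: "'f::field \<Rightarrow> 'f \<Rightarrow> 'f quat \<Rightarrow> 'f" where
  "nrd a b z = scalar_part (qmul a b z (qconj z))"

definition is_division :: "'f::field \<Rightarrow> 'f \<Rightarrow> bool" where
  "is_division a b \<longleftrightarrow> (\<forall>z. z \<noteq> qzero \<longrightarrow> (\<exists>w. qmul a b z w = qone \<and> qmul a b w z = qone))"

definition qunits :: "'f::field \<Rightarrow> 'f \<Rightarrow> 'f quat set" where
  "qunits a b = {z. \<exists>w. qmul a b z w = qone \<and> qmul a b w z = qone}"

definition qinv :: "'f::field \<Rightarrow> 'f \<Rightarrow> 'f quat \<Rightarrow> 'f quat" where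
  "qinv a b z = (SOME w. qmul a b z w = qone \<and> qmul a b w z = qone)"

text \<open>GL_2(F): matrices (p,q,r,s) = [[p,q],[r,s]] with nonzero determinant.\<close>
definition GL2 :: "('f::field \<times> 'f \<times> 'f \<times> 'f) set" where
  "GL2 = {(p,q,r,s). p*s - q*r \<noteq> 0}"

text \<open>(x,y)\<cdot>\<rho>(g1,g2,g3) = (g1^{-1} x g2, g1^{-1} y g2) g3, where
  (x,y)[[p,q],[r,s]] = (p x + r y, q x + s y).\<close>
definition act :: "'f::field \<Rightarrow> 'f \<Rightarrow> 'f quat \<times> 'f quat \<Rightarrow> 'f quat \<Rightarrow> 'f quat
                    \<Rightarrow> 'f \<times> 'f \<times> 'f \<times> 'f \<Rightarrow> 'f quat \<times> 'f quat" where
  "act a b v g1 g2 g3 =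
     (let x' = qmul a b (qmul a b (qinv a b g1) (fst v)) g2;
          y' = qmul a b (qmul a b (qinv a b g1) (snd v)) g2;
          (p,q,r,s) = g3
      in (qadd (qscale p x') (qscale r y'), qadd (qscale q x') (qscale s y')))"

definition orbit :: "'f::field \<Rightarrow> 'f \<Rightarrow> 'f quat \<times> 'f quat \<Rightarrow> ('f quat \<times> 'f quat) set" where
  "orbit a b v = {act a b v g1 g2 g3 | g1 g2 g3.
                    g1 \<in> qunits a b \<and> g2 \<in> qunits a b \<and> g3 \<in> GL2}"

definition Pform :: "'f::field \<Rightarrow> 'f \<Rightarrow> 'f quat \<times> 'f quat \<Rightarrow> 'f" where
  "Pform a b v = - nrd a b (qsub (qmul a b (fst v) (qconj (snd v)))
                                 (qmul a b (snd v) (qconj (fst v))))"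

end

theory Submission
  imports Defs
begin

text \<open>Write \<open>v = (x, y)\<close> and \<open>z = x y\<^sup>\<iota>\<close>. Then \<open>x y\<^sup>\<iota> - y x\<^sup>\<iota> = z - z\<^sup>\<iota>\<close> is a pure
  quaternion, and \<open>P(v) = 0\<close> says that its reduced norm vanishes. Since \<open>D\<close> is a division
  algebra the norm form is anisotropic, so \<open>z\<close> is a scalar \<open>c\<close> (here \<open>2 \<noteq> 0\<close> is used). If
  \<open>x \<noteq> 0\<close>, multiplying \<open>y x\<^sup>\<iota> = c\<close> on the right by \<open>x\<close> gives \<open>y = t x\<close> with \<open>t = c / Nrd x\<close>,
  so \<open>v = (0, 1)\<cdot>\<rho>(1, x, g\<^sub>3)\<close> with \<open>g\<^sub>3 = [[0, -1], [1, t]]\<close>; if \<open>x = 0 \<noteq> y\<close> then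
  \<open>v = (0, 1)\<cdot>\<rho>(1, y, 1)\<close>. Hence every singular \<open>v \<noteq> 0\<close> lies in the orbit of \<open>(0, 1)\<close>,
  while the orbit of \<open>(0, 0)\<close> is a single point.\<close>

lemma qmul_assoc: "qmul a b (qmul a b x y) z = qmul a b x (qmul a b y z)"
  by (cases x; cases y; cases z) (simp add: algebra_simps)

lemma qmul_qone_left [simp]: "qmul a b qone x = x"
  by (cases x) (simp add: qone_def)

lemma qmul_qone_right [simp]: "qmul a b x qone = x"
  by (cases x) (simp add: qone_def)

lemma qmul_qzero_left [simp]: "qmul a b qzero x = qzero"
  by (cases x) (simp add: qzero_def)

lemma qmul_qzero_right [simp]: "qmul a b x qzero = qzero"
  by (cases x) (simp add: qzero_def)

lemma qmul_qadd_left: "qmul a b (qadd x y) z = qadd (qmul a b x z) (qmul a b y z)"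
  by (cases x; cases y; cases z) (simp add: algebra_simps)

lemma qmul_qadd_right: "qmul a b z (qadd x y) = qadd (qmul a b z x) (qmul a b z y)"
  by (cases x; cases y; cases z) (simp add: algebra_simps)

lemma qmul_qscale_left: "qmul a b (qscale c x) z = qscale c (qmul a b x z)"
  by (cases x; cases z) (simp add: algebra_simps)

lemma qmul_qscale_right: "qmul a b z (qscale c x) = qscale c (qmul a b z x)"
  by (cases x; cases z) (simp add: algebra_simps)

lemma qmul_scalar_left: "qmul a b (Quat c 0 0 0) x = qscale c x"
  by (cases x) (simp add: algebra_simps)

lemma qmul_scalar_right: "qmul a b x (Quat c 0 0 0) = qscale c x"
  by (cases x) (simp add: algebra_simps)

lemma qscale_qzero [simp]: "qscale c qzero = qzero"
  by (simp add: qzero_def)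

lemma qscale_zero [simp]: "qscale 0 x = qzero"
  by (cases x) (simp add: qzero_def)

lemma qscale_one [simp]: "qscale 1 x = x"
  by (cases x) simp

lemma qscale_qscale: "qscale c (qscale d x) = qscale (c * d) x"
  by (cases x) (simp add: algebra_simps)

lemma qadd_qzero_left [simp]: "qadd qzero x = x"
  by (cases x) (simp add: qzero_def)

lemma qadd_qzero_right [simp]: "qadd x qzero = x"
  by (cases x) (simp add: qzero_def)

lemma qconj_qmul_qconj: "qconj (qmul a b x (qconj y)) = qmul a b y (qconj x)"
  by (cases x; cases y) (simp add: algebra_simps)

lemma qmul_qconj_right: "qmul a b z (qconj z) = Quat (nrd a b z) 0 0 0"
  by (cases z) (simp add: nrd_def algebra_simps)

lemma qmul_qconj_left: "qmul a b (qconj z) z = Quat (nrd a b z) 0 0 0"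
  by (cases z) (simp add: nrd_def algebra_simps)

lemma qsub_qconj_eq_qzero_iff:
  fixes z :: "'f::field quat"
  assumes "(2::'f) \<noteq> 0"
  shows "qsub z (qconj z) = qzero \<longleftrightarrow> z = Quat (scalar_part z) 0 0 0"
  using assms by (cases z) (simp add: qzero_def flip: mult_2)

lemma qinv_right: "z \<in> qunits a b \<Longrightarrow> qmul a b z (qinv a b z) = qone"
  unfolding qunits_def qinv_def by (rule someI2_ex) auto

lemma qinv_left: "z \<in> qunits a b \<Longrightarrow> qmul a b (qinv a b z) z = qone"
  unfolding qunits_def qinv_def by (rule someI2_ex) auto

lemma qinv_eqI:
  assumes "z \<in> qunits a b" "qmul a b w z = qone"
  shows "qinv a b z = w"
proof -
  have "w = qmul a b (qmul a b w z) (qinv a b z)"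
    using qinv_right[OF assms(1)] by (simp add: qmul_assoc)
  then show ?thesis using assms(2) by simp
qed

lemma qone_in_qunits: "qone \<in> qunits a b"
  unfolding qunits_def using qmul_qone_left[of a b qone] by blast

lemma qinv_qone: "qinv a b qone = qone"
  using qinv_eqI[OF qone_in_qunits] by simp

lemma qinv_in_qunits: "z \<in> qunits a b \<Longrightarrow> qinv a b z \<in> qunits a b"
  using qinv_left qinv_right unfolding qunits_def by blast

lemma qmul_in_qunits_and_qinv:
  assumes "g \<in> qunits a b" "h \<in> qunits a b"
  shows "qmul a b g h \<in> qunits a b"
    and "qinv a b (qmul a b g h) = qmul a b (qinv a b h) (qinv a b g)"
proof -
  let ?w = "qmul a b (qinv a b h) (qinv a b g)"
  have "qmul a b (qmul a b g h) ?w = qmul a b g (qmul a b (qmul a b h (qinv a b h)) (qinv a b g))"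
    "qmul a b ?w (qmul a b g h) = qmul a b (qinv a b h) (qmul a b (qmul a b (qinv a b g) g) h)"
    by (simp_all only: qmul_assoc)
  then have "qmul a b (qmul a b g h) ?w = qone" "qmul a b ?w (qmul a b g h) = qone"
    using assms by (simp_all add: qinv_left qinv_right)
  then show gh: "qmul a b g h \<in> qunits a b"
    unfolding qunits_def by blast
  show "qinv a b (qmul a b g h) = ?w"
    using qinv_eqI[OF gh] \<open>qmul a b ?w (qmul a b g h) = qone\<close> by blast
qed

lemma nrd_eq_zero_iff:
  assumes "is_division a b"
  shows "nrd a b z = 0 \<longleftrightarrow> z = qzero"
proof
  assume "nrd a b z = 0"
  show "z = qzero"
  proof (rule ccontr)
    assume "z \<noteq> qzero"
    then obtain w where "qmul a b w z = qone"
      using assms unfolding is_division_def by blast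
    then have "qconj z = qmul a b w (qmul a b z (qconj z))"
      by (metis qmul_assoc qmul_qone_left)
    also have "\<dots> = qzero"
      using \<open>nrd a b z = 0\<close> by (cases w) (simp add: qmul_qconj_right qzero_def)
    finally show False
      using \<open>z \<noteq> qzero\<close> by (cases z) (simp add: qzero_def)
  qed
qed (simp add: nrd_def qzero_def)

lemma in_qunits_iff:
  assumes "is_division a b"
  shows "z \<in> qunits a b \<longleftrightarrow> z \<noteq> qzero"
proof
  assume "z \<in> qunits a b"
  then obtain w where "qmul a b z w = qone" unfolding qunits_def by blast
  then show "z \<noteq> qzero" by (cases w) (auto simp: qzero_def qone_def)
qed (use assms in \<open>auto simp: is_division_def qunits_def\<close>)

definition qsandwich :: "'f::field \<Rightarrow> 'f \<Rightarrow> 'f quat \<Rightarrow> 'f quat \<Rightarrow> 'f quat \<Rightarrow> 'f quat" where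
  "qsandwich a b g1 g2 x = qmul a b (qmul a b (qinv a b g1) x) g2"

definition gl2_act :: "'f::field \<times> 'f \<times> 'f \<times> 'f \<Rightarrow> 'f quat \<times> 'f quat \<Rightarrow> 'f quat \<times> 'f quat" where
  "gl2_act g v = (case g of (p, q, r, s) \<Rightarrow>
     (qadd (qscale p (fst v)) (qscale r (snd v)), qadd (qscale q (fst v)) (qscale s (snd v))))"

definition gl2_mult :: "'f::field \<times> 'f \<times> 'f \<times> 'f \<Rightarrow> 'f \<times> 'f \<times> 'f \<times> 'f \<Rightarrow> 'f \<times> 'f \<times> 'f \<times> 'f" where
  "gl2_mult g h = (case g of (p, q, r, s) \<Rightarrow> case h of (p', q', r', s') \<Rightarrow>
     (p * p' + q * r', p * q' + q * s', r * p' + s * r', r * q' + s * s'))"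

definition gl2_inv :: "'f::field \<times> 'f \<times> 'f \<times> 'f \<Rightarrow> 'f \<times> 'f \<times> 'f \<times> 'f" where
  "gl2_inv g = (case g of (p, q, r, s) \<Rightarrow> let d = p * s - q * r in (s / d, - q / d, - r / d, p / d))"

definition gl2_det :: "'f::field \<times> 'f \<times> 'f \<times> 'f \<Rightarrow> 'f" where
  "gl2_det g = (case g of (p, q, r, s) \<Rightarrow> p * s - q * r)"

lemma act_eq_gl2_act_qsandwich:
  "act a b v g1 g2 g3 = gl2_act g3 (map_prod (qsandwich a b g1 g2) (qsandwich a b g1 g2) v)"
  unfolding act_def gl2_act_def qsandwich_def by (cases g3; cases v) (simp add: Let_def)

lemma map_prod_qsandwich_gl2_act:
  "map_prod (qsandwich a b g1 g2) (qsandwich a b g1 g2) (gl2_act g v)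
     = gl2_act g (map_prod (qsandwich a b g1 g2) (qsandwich a b g1 g2) v)"
  unfolding gl2_act_def qsandwich_def
  by (cases g; cases v) (simp add: qmul_qadd_left qmul_qadd_right qmul_qscale_left qmul_qscale_right)

lemma qsandwich_qsandwich:
  assumes "g1 \<in> qunits a b" "h1 \<in> qunits a b"
  shows "qsandwich a b h1 h2 (qsandwich a b g1 g2 x) = qsandwich a b (qmul a b g1 h1) (qmul a b g2 h2) x"
  unfolding qsandwich_def qmul_in_qunits_and_qinv(2)[OF assms] by (simp add: qmul_assoc)

lemma gl2_act_gl2_act: "gl2_act h (gl2_act g v) = gl2_act (gl2_mult g h) v"
  unfolding gl2_act_def gl2_mult_def
  by (cases g; cases h; cases "fst v"; cases "snd v") (simp add: algebra_simps)

lemma gl2_mult_gl2_inv: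
  assumes "g \<in> GL2"
  shows "gl2_mult g (gl2_inv g) = (1, 0, 0, 1)"
proof (cases g)
  case (fields p q r s)
  define d where "d = p * s - q * r"
  have "d \<noteq> 0"
    using assms fields by (simp add: GL2_def d_def)
  then have "gl2_mult (p, q, r, s) (s / d, - q / d, - r / d, p / d) = (1, 0, 0, 1)"
    by (simp add: gl2_mult_def field_simps) (simp add: d_def algebra_simps)
  then show ?thesis
    by (simp add: fields gl2_inv_def d_def Let_def)
qed

lemma GL2_iff_gl2_det: "g \<in> GL2 \<longleftrightarrow> gl2_det g \<noteq> 0"
  unfolding GL2_def gl2_det_def by (cases g) auto

lemma gl2_det_mult: "gl2_det (gl2_mult g h) = gl2_det g * gl2_det h"
  unfolding gl2_det_def gl2_mult_def by (cases g; cases h) (simp add: algebra_simps)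

lemma gl2_mult_in_GL2: "g \<in> GL2 \<Longrightarrow> h \<in> GL2 \<Longrightarrow> gl2_mult g h \<in> GL2"
  by (simp add: GL2_iff_gl2_det gl2_det_mult)

lemma gl2_inv_in_GL2:
  assumes "g \<in> GL2"
  shows "gl2_inv g \<in> GL2"
proof -
  have "gl2_det g * gl2_det (gl2_inv g) = gl2_det (1, 0, 0, 1)"
    using assms by (simp add: gl2_mult_gl2_inv flip: gl2_det_mult)
  then have "gl2_det g * gl2_det (gl2_inv g) = 1"
    by (simp add: gl2_det_def)
  then show ?thesis
    by (auto simp: GL2_iff_gl2_det)
qed

lemma gl2_act_one [simp]: "gl2_act (1, 0, 0, 1) v = v"
  unfolding gl2_act_def by simp

lemma act_act:
  assumes "g1 \<in> qunits a b" "h1 \<in> qunits a b"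
  shows "act a b (act a b v g1 g2 g3) h1 h2 h3
           = act a b v (qmul a b g1 h1) (qmul a b g2 h2) (gl2_mult g3 h3)"
  unfolding act_eq_gl2_act_qsandwich map_prod_qsandwich_gl2_act gl2_act_gl2_act
  by (cases v) (simp add: qsandwich_qsandwich[OF assms])

lemma act_one: "act a b v qone qone (1, 0, 0, 1) = v"
  by (cases v) (simp add: act_eq_gl2_act_qsandwich qsandwich_def qinv_qone)

lemma act_act_inverse:
  assumes "g1 \<in> qunits a b" "g2 \<in> qunits a b" "g3 \<in> GL2"
  shows "act a b (act a b v g1 g2 g3) (qinv a b g1) (qinv a b g2) (gl2_inv g3) = v"
  using assms by (simp add: act_act qinv_in_qunits qinv_right gl2_mult_gl2_inv act_one)

lemma orbit_subset_of_mem: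
  assumes "w \<in> orbit a b v"
  shows "orbit a b w \<subseteq> orbit a b v"
proof
  fix u assume "u \<in> orbit a b w"
  with assms obtain g1 g2 g3 h1 h2 h3 where
    g: "g1 \<in> qunits a b" "g2 \<in> qunits a b" "g3 \<in> GL2" "w = act a b v g1 g2 g3" and
    h: "h1 \<in> qunits a b" "h2 \<in> qunits a b" "h3 \<in> GL2" "u = act a b w h1 h2 h3"
    unfolding orbit_def by blast
  then have "u = act a b v (qmul a b g1 h1) (qmul a b g2 h2) (gl2_mult g3 h3)"
    by (simp add: act_act)
  then show "u \<in> orbit a b v"
    unfolding orbit_def using g h qmul_in_qunits_and_qinv(1) gl2_mult_in_GL2 by blast
qed

lemma mem_orbit_sym:
  assumes "w \<in> orbit a b v"
  shows "v \<in> orbit a b w"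
proof -
  obtain g1 g2 g3 where g: "g1 \<in> qunits a b" "g2 \<in> qunits a b" "g3 \<in> GL2"
    and w: "w = act a b v g1 g2 g3"
    using assms unfolding orbit_def by blast
  have "v = act a b w (qinv a b g1) (qinv a b g2) (gl2_inv g3)"
    unfolding w using act_act_inverse[OF g] by simp
  then show ?thesis
    unfolding orbit_def using g qinv_in_qunits gl2_inv_in_GL2 by blast
qed

lemma orbit_eq_of_mem: "w \<in> orbit a b v \<Longrightarrow> orbit a b w = orbit a b v"
  by (meson mem_orbit_sym orbit_subset_of_mem subset_antisym)

lemma mem_orbit_self: "v \<in> orbit a b v"
proof -
  have "(1, 0, 0, 1) \<in> GL2"
    by (simp add: GL2_def)
  then show ?thesis
    unfolding orbit_def using act_one[of a b v] qone_in_qunits by force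
qed

lemma orbit_qzero_qzero: "orbit a b (qzero, qzero) = {(qzero, qzero)}"
proof -
  have "act a b (qzero, qzero) g1 g2 g3 = (qzero, qzero)" for g1 g2 g3
    by (cases g3) (simp add: act_eq_gl2_act_qsandwich qsandwich_def gl2_act_def)
  then show ?thesis
    using mem_orbit_self[of "(qzero, qzero)" a b] unfolding orbit_def by blast
qed

lemma act_qzero_qone: "act a b (qzero, qone) qone z (p, q, r, s) = (qscale r z, qscale s z)"
  by (simp add: act_eq_gl2_act_qsandwich qsandwich_def qinv_qone gl2_act_def)

lemma qmul_qconj_scalar_of_Pform_eq_zero:
  fixes a b :: "'f::field"
  assumes "(2::'f) \<noteq> 0" "is_division a b" "Pform a b (x, y) = 0"
  shows "qmul a b x (qconj y) = Quat (scalar_part (qmul a b x (qconj y))) 0 0 0"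
proof -
  let ?z = "qmul a b x (qconj y)"
  have "qmul a b y (qconj x) = qconj ?z"
    by (simp add: qconj_qmul_qconj)
  then have "nrd a b (qsub ?z (qconj ?z)) = 0"
    using assms(3) by (simp add: Pform_def)
  then show ?thesis
    by (simp add: nrd_eq_zero_iff[OF assms(2)] qsub_qconj_eq_qzero_iff[OF assms(1)])
qed

lemma singular_mem_orbit_qzero_qone:
  fixes a b :: "'f::field"
  assumes "(2::'f) \<noteq> 0" "is_division a b" "Pform a b (x, y) = 0" "(x, y) \<noteq> (qzero, qzero)"
  shows "(x, y) \<in> orbit a b (qzero, qone)"
proof (cases "x = qzero")
  case True
  then have "(x, y) = act a b (qzero, qone) qone y (1, 0, 0, 1)"
    by (simp add: act_qzero_qone)
  moreover have "y \<in> qunits a b"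
    using True assms(2,4) by (simp add: in_qunits_iff)
  ultimately show ?thesis
    unfolding orbit_def using qone_in_qunits by (force simp: GL2_def)
next
  case False
  define c where "c = scalar_part (qmul a b x (qconj y))"
  define n where "n = nrd a b x"
  have "qmul a b x (qconj y) = Quat c 0 0 0"
    using qmul_qconj_scalar_of_Pform_eq_zero[OF assms(1-3)] unfolding c_def .
  then have "qmul a b y (qconj x) = qconj (Quat c 0 0 0)"
    by (metis qconj_qmul_qconj)
  then have yx: "qmul a b y (qconj x) = Quat c 0 0 0"
    by simp
  have "n \<noteq> 0"
    using False assms(2) by (simp add: n_def nrd_eq_zero_iff)
  then have "y = qscale (inverse n) (qmul a b y (qmul a b (qconj x) x))"
    by (simp add: n_def qmul_qconj_left qmul_scalar_right qscale_qscale)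
  also have "\<dots> = qscale (c / n) x"
    by (simp add: yx qmul_scalar_left qscale_qscale divide_inverse_commute flip: qmul_assoc)
  finally have "y = qscale (c / n) x" .
  then have "(x, y) = act a b (qzero, qone) qone x (0, -1, 1, c / n)"
    by (simp add: act_qzero_qone)
  moreover have "x \<in> qunits a b"
    using False assms(2) by (simp add: in_qunits_iff)
  ultimately show ?thesis
    unfolding orbit_def using qone_in_qunits by (force simp: GL2_def)
qed

theorem proposition2p2:
  fixes a b :: "'f::field"
  assumes "(2::'f) \<noteq> 0"
    and "a \<noteq> 0" and "b \<noteq> 0"
    and "is_division a b"
  shows "{orbit a b v | v. Pform a b v = 0}
           = {orbit a b (qzero, qzero), orbit a b (qzero, qone)}
       \<and> orbit a b (qzero, qzero) \<noteq> orbit a b (qzero, qone)"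
proof -
  have "Pform a b (qzero, qzero) = 0" "Pform a b (qzero, qone) = 0"
    by (simp_all add: Pform_def nrd_def qzero_def qone_def)
  moreover have "orbit a b v \<in> {orbit a b (qzero, qzero), orbit a b (qzero, qone)}"
    if "Pform a b v = 0" for v
  proof (cases "v = (qzero, qzero)")
    case False
    then have "v \<in> orbit a b (qzero, qone)"
      using singular_mem_orbit_qzero_qone[OF assms(1,4)] that by (cases v) simp
    then show ?thesis
      by (simp add: orbit_eq_of_mem)
  qed simp
  moreover have "(qzero, qone) \<notin> orbit a b (qzero, qzero)"
    unfolding orbit_qzero_qzero by (simp add: qzero_def qone_def)
  then have "orbit a b (qzero, qzero) \<noteq> orbit a b (qzero, qone)"
    using mem_orbit_self by blast
  ultimately show ?thesis
    by blast
qed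

end
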